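(* Let $x\in\mathbb{R}^n$, $a\in\mathbb{R}$, $b\in\mathbb{R}^n$, and let $C\in\mathbb{R}^{n\times n}$ be symmetric and nonsingular, and let $f(y)=a+b^\top(y-x)+\tfrac12 (y-x)^\top C(y-x)$. Let $y^1,\dots,y^p\in\mathbb{R}^n$, set $z^\ell=\nabla^2 f(x)(y^\ell-x)=C(y^\ell-x)$, $\ell=1,\dots,p$, and let $d^{prev}\in\mathbb{R}^n$. Consider the linear conditions on $d\in\mathbb{R}^n$: $$(z^\ell)^\top d=-f(y^\ell)+f(x)+\tfrac12 (y^\ell-x)^\top z^\ell,\qquad \ell=1,\dots,p,$$ and assume this system is feasible and underdetermined in $d$. Let $d^*$ be the optimal solution of $\min_d \tfrac12\|d-d^{prev}\|^2$ subject to these conditions. Then $$\|d^*-(-C^{-1}b)\|^2\le\|d^{prev}-(-C^{-1}b)\|^2.$$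
   Context: $\|\cdot\|$ is the Euclidean norm. *)

theory Defs
  imports "HOL-Analysis.Analysis"
begin

end

theory Submission
  imports Defs
begin

(* The Newton point -C^-1 b of the quadratic f satisfies every interpolation condition, so it
   lies in the affine feasible set of the least-change problem.  The optimal d* is the metric
   projection of d^prev onto that closed convex set, and a projection is never farther than its
   starting point from any member of the set. *)

lemma matrix_inv_right:
  assumes "invertible A"
  shows "A ** matrix_inv A = mat 1"
  using someI_ex[OF assms[unfolded invertible_def]] unfolding matrix_inv_def by blast

lemma matrix_vector_mul_matrix_inv:
  assumes "invertible A"
  shows "A *v (matrix_inv A *v v) = v"
  by (simp add: matrix_vector_mul_assoc matrix_inv_right[OF assms])

lemma symmetric_matrix_inner_commute:
  fixes C :: "real ^ 'n ^ 'n"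
  assumes "transpose C = C"
  shows "(C *v u) \<bullet> v = u \<bullet> (C *v v)"
  by (metis assms dot_lmul_matrix inner_commute vector_transpose_matrix)

lemma newton_point_interpolates:
  fixes C :: "real ^ 'n ^ 'n"
  assumes "transpose C = C" and "C *v h = - b"
    and "\<And>w. f w = a + b \<bullet> (w - x) + (1/2) * ((w - x) \<bullet> (C *v (w - x)))"
  shows "(C *v (w - x)) \<bullet> h = - f w + f x + (1/2) * ((w - x) \<bullet> (C *v (w - x)))"
proof -
  have "(C *v (w - x)) \<bullet> h = (w - x) \<bullet> (C *v h)"
    using symmetric_matrix_inner_commute[OF assms(1)] .
  also have "\<dots> = - (b \<bullet> (w - x))"
    using assms(2) by (simp add: inner_commute)
  finally show ?thesis
    by (simp add: assms(3))
qed

lemma any_closest_point_dist_le: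
  fixes a :: "'a::real_inner"
  assumes "convex S" "closed S" "x \<in> S" "y \<in> S" "\<forall>z\<in>S. dist a x \<le> dist a z"
  shows "dist x y \<le> dist a y"
proof -
  have obtuse: "(a - x) \<bullet> (y - x) \<le> 0"
    using any_closest_point_dot[OF assms] .
  have "(dist a y)\<^sup>2 = (dist a x)\<^sup>2 - 2 * ((a - x) \<bullet> (y - x)) + (dist x y)\<^sup>2"
    unfolding dist_norm power2_norm_eq_inner
    by (simp add: inner_diff_left inner_diff_right inner_commute)
  with obtuse have "(dist x y)\<^sup>2 \<le> (dist a y)\<^sup>2"
    using zero_le_power2[of "dist a x"] by linarith
  then show ?thesis
    by (simp add: power2_le_iff_abs_le)
qed

theorem theorem3:
  fixes x b dprev dstar :: "real ^ 'n" and a :: real and C :: "real ^ 'n ^ 'n"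
    and y :: "nat \<Rightarrow> real ^ 'n" and p :: nat and f :: "real ^ 'n \<Rightarrow> real"
    and z :: "nat \<Rightarrow> real ^ 'n"
  assumes symC: "transpose C = C"
    and nonsingC: "invertible C"
    and f_def: "\<And>w. f w = a + b \<bullet> (w - x) + (1/2) * ((w - x) \<bullet> (C *v (w - x)))"
    and z_def: "\<And>l. z l = C *v (y l - x)"
    and feasible: "\<exists>d. \<forall>l\<in>{1..p}. z l \<bullet> d = - f (y l) + f x + (1/2) * ((y l - x) \<bullet> z l)"
    and underdetermined: "p < CARD('n)"
    and dstar_feas: "\<forall>l\<in>{1..p}. z l \<bullet> dstar = - f (y l) + f x + (1/2) * ((y l - x) \<bullet> z l)"
    and dstar_opt: "\<And>d. (\<forall>l\<in>{1..p}. z l \<bullet> d = - f (y l) + f x + (1/2) * ((y l - x) \<bullet> z l))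
                \<Longrightarrow> (1/2) * (norm (dstar - dprev))\<^sup>2 \<le> (1/2) * (norm (d - dprev))\<^sup>2"
  shows "(norm (dstar - (- (matrix_inv C *v b))))\<^sup>2 \<le> (norm (dprev - (- (matrix_inv C *v b))))\<^sup>2"
proof -
  define h where "h = - (matrix_inv C *v b)"
  define S where "S = (\<Inter>l\<in>{1..p}. {d. z l \<bullet> d = - f (y l) + f x + (1/2) * ((y l - x) \<bullet> z l)})"
  have "convex S" "closed S"
    unfolding S_def by (auto intro!: convex_INT convex_hyperplane closed_hyperplane)
  have "C *v h = - b"
    unfolding h_def by (simp add: linear_neg[OF matrix_vector_mul_linear] matrix_vector_mul_matrix_inv[OF nonsingC])
  then have "h \<in> S"
    unfolding S_def z_def using newton_point_interpolates[OF symC _ f_def] by simp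
  have "dstar \<in> S"
    unfolding S_def using dstar_feas by simp
  have "\<forall>d\<in>S. dist dprev dstar \<le> dist dprev d"
    unfolding S_def using dstar_opt by (simp add: dist_norm norm_minus_commute)
  then have "dist dstar h \<le> dist dprev h"
    using any_closest_point_dist_le[OF \<open>convex S\<close> \<open>closed S\<close> \<open>dstar \<in> S\<close> \<open>h \<in> S\<close>] by blast
  then show ?thesis
    unfolding h_def[symmetric] dist_norm by (simp add: power_mono)
qed

end
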